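(* Let $h(\alpha_1,\ldots,\alpha_r)$ be a rational function. (1) There exists a set $K\subset\mathbb{Z}^r$ contained in a finite union of hyperplanes such that if $h$ is N-small then $\lim_{\xi\to\infty} h(\xi^s)$ is finite for all $s\in\mathbb{Z}^r\setminus K$. (2) If $K\subset \mathbb{Z}^r$ is contained in a finite union of hyperplanes and $\lim_{\xi\to\infty} h(\xi^s)$ is finite for all $s\in\mathbb{Z}^r\setminus K$, then $h$ is N-small.
   Context: For $f\in \mathbb{Z}[\alpha_1^{\pm 1},\ldots,\alpha_r^{\pm 1}]$ the Newton polytope $\mathcal N(f)\subset\mathbb{R}^r$ is the convex hull of the exponent vectors of the monomials of $f$ with nonzero coefficient. A rational function $h=f_1/f_2$ with $f_1,f_2$ Laurent polynomials is N-small if $\mathcal N(f_1)\subset\mathcal N(f_2)$ (independent of the presentation). For $s\in\mathbb{Z}^r$, $h(\xi^s)$ denotes the one-variable rational function obtained by substituting $\alpha_i=\xi^{s_i}$. *)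

theory Defs
  imports "HOL-Analysis.Analysis"
begin

text \<open>A Laurent polynomial in r variables with integer coefficients is represented by its
  coefficient function on exponent vectors in Z^r (type int^'r), with finite support.\<close>

definition supp_lp :: "(int^'r \<Rightarrow> int) \<Rightarrow> (int^'r) set" where
  "supp_lp f = {e. f e \<noteq> 0}"

definition laurent_poly :: "(int^'r \<Rightarrow> int) \<Rightarrow> bool" where
  "laurent_poly f \<longleftrightarrow> finite (supp_lp f)"

definition real_vec :: "int^'r \<Rightarrow> real^'r" where
  "real_vec e = (\<chi> i. real_of_int (e $ i))"

definition newton_polytope :: "(int^'r \<Rightarrow> int) \<Rightarrow> (real^'r) set" where
  "newton_polytope f = convex hull (real_vec ` supp_lp f)"

text \<open>h = f1/f2 is N-small.\<close>
definition N_small :: "(int^'r \<Rightarrow> int) \<Rightarrow> (int^'r \<Rightarrow> int) \<Rightarrow> bool" where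
  "N_small f1 f2 \<longleftrightarrow> newton_polytope f1 \<subseteq> newton_polytope f2"

definition idot :: "int^'r \<Rightarrow> int^'r \<Rightarrow> int" where
  "idot s e = (\<Sum>i\<in>UNIV. s $ i * e $ i)"

text \<open>Substitution alpha_i = xi^(s_i): the resulting one-variable Laurent polynomial,
  given by its coefficient function int => int, and its evaluation at a real xi.\<close>
definition subst_coeff :: "(int^'r \<Rightarrow> int) \<Rightarrow> int^'r \<Rightarrow> int \<Rightarrow> int" where
  "subst_coeff f s k = (\<Sum>e\<in>{e\<in>supp_lp f. idot s e = k}. f e)"

definition subst_eval :: "(int^'r \<Rightarrow> int) \<Rightarrow> int^'r \<Rightarrow> real \<Rightarrow> real" where
  "subst_eval f s \<xi> = (\<Sum>e\<in>supp_lp f. real_of_int (f e) * \<xi> powi (idot s e))"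

definition finite_limit :: "(int^'r \<Rightarrow> int) \<Rightarrow> (int^'r \<Rightarrow> int) \<Rightarrow> int^'r \<Rightarrow> bool" where
  "finite_limit f1 f2 s \<longleftrightarrow>
     (\<exists>k. subst_coeff f2 s k \<noteq> 0) \<and>
     (\<exists>L. ((\<lambda>\<xi>. subst_eval f1 s \<xi> / subst_eval f2 s \<xi>) \<longlongrightarrow> L) at_top)"

definition in_finite_hyperplanes :: "(int^'r) set \<Rightarrow> bool" where
  "in_finite_hyperplanes K \<longleftrightarrow>
     (\<exists>H :: ((real^'r) \<times> real) set. finite H \<and> (\<forall>(a, c)\<in>H. a \<noteq> 0) \<and>
        K \<subseteq> (\<Union>(a, c)\<in>H. {s. a \<bullet> real_vec s = c}))"

end

theory Submission
  imports Defs
begin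

text \<open>Along a direction s, the substituted polynomial f(\<xi>^s) behaves like its terms of largest
  degree s\<cdot>e; if s separates the exponents of f1 and f2, these are single monomials.
  N-smallness says exactly that the top degree of f1 never exceeds that of f2, so the quotient
  has a finite limit.  Conversely, an exponent e1 of f1 outside N(f2) is separated from N(f2) by
  a hyperplane; the directions s with s\<cdot>e1 > s\<cdot>e for all exponents e of f2 form a nonempty
  open cone, which contains lattice points off any finite union of hyperplanes, and along such s
  the quotient tends to infinity.\<close>

lemma inner_real_vec: "real_vec s \<bullet> real_vec e = real_of_int (idot s e)"
  by (simp add: inner_vec_def real_vec_def idot_def)

lemma real_vec_diff: "real_vec (a - b) = real_vec a - real_vec b"
  by (simp add: real_vec_def vec_eq_iff)

lemma real_vec_eq_iff: "real_vec a = real_vec b \<longleftrightarrow> a = b"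
  by (simp add: real_vec_def vec_eq_iff)

lemma idot_diff_right: "idot s (a - b) = idot s a - idot s b"
  by (simp add: idot_def sum_subtractf right_diff_distrib)

subsection \<open>Leading terms of the substituted polynomial\<close>

lemma tendsto_powi_neg_at_top:
  assumes "n < 0"
  shows "((\<lambda>x::real. x powi n) \<longlongrightarrow> 0) at_top"
proof -
  have "((\<lambda>x::real. inverse x ^ nat (-n)) \<longlongrightarrow> 0 ^ nat (-n)) at_top"
    by (intro tendsto_intros tendsto_inverse_0_at_top filterlim_ident)
  moreover have "(0::real) ^ nat (-n) = 0" using assms by simp
  moreover have "(\<lambda>x::real. x powi n) = (\<lambda>x. inverse x ^ nat (-n))"
    using assms by (auto simp: power_int_def)
  ultimately show ?thesis by simp
qed

lemma tendsto_subst_eval_div_powi: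
  assumes "laurent_poly f" and "\<And>e. e \<in> supp_lp f \<Longrightarrow> idot s e \<le> d"
  shows "((\<lambda>\<xi>. subst_eval f s \<xi> / \<xi> powi d) \<longlongrightarrow> real_of_int (subst_coeff f s d)) at_top"
proof -
  have fin: "finite (supp_lp f)" using assms(1) by (simp add: laurent_poly_def)
  have term_lim: "((\<lambda>\<xi>. real_of_int (f e) * \<xi> powi (idot s e - d)) \<longlongrightarrow>
      (if idot s e = d then real_of_int (f e) else 0)) at_top" if "e \<in> supp_lp f" for e
  proof (cases "idot s e = d")
    case False
    then have "idot s e - d < 0" using assms(2) that by force
    with False show ?thesis using tendsto_mult[OF tendsto_const tendsto_powi_neg_at_top] by simp
  qed simp
  have "((\<lambda>\<xi>. \<Sum>e\<in>supp_lp f. real_of_int (f e) * \<xi> powi (idot s e - d)) \<longlongrightarrow>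
      (\<Sum>e\<in>supp_lp f. if idot s e = d then real_of_int (f e) else 0)) at_top"
    by (rule tendsto_sum) (rule term_lim)
  moreover have "(\<Sum>e\<in>supp_lp f. if idot s e = d then real_of_int (f e) else 0)
      = real_of_int (subst_coeff f s d)"
    unfolding subst_coeff_def of_int_sum by (simp add: sum.inter_filter[OF fin])
  moreover have "\<forall>\<^sub>F \<xi> in at_top. (\<Sum>e\<in>supp_lp f. real_of_int (f e) * \<xi> powi (idot s e - d))
      = subst_eval f s \<xi> / \<xi> powi d"
    using eventually_gt_at_top[of "0::real"]
    by eventually_elim (simp add: subst_eval_def sum_divide_distrib power_int_diff)
  ultimately show ?thesis using tendsto_cong by fastforce
qed

lemma top_exponent:
  assumes "laurent_poly f" and "supp_lp f \<noteq> {}" and "inj_on (idot s) (supp_lp f)"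
  obtains e0 where "e0 \<in> supp_lp f" and "\<And>e. e \<in> supp_lp f \<Longrightarrow> idot s e \<le> idot s e0"
    and "subst_coeff f s (idot s e0) = f e0"
proof -
  have fin: "finite (supp_lp f)" using assms(1) by (simp add: laurent_poly_def)
  have "Max (idot s ` supp_lp f) \<in> idot s ` supp_lp f"
    using fin assms(2) by (intro Max_in) auto
  then obtain e0 where e0: "e0 \<in> supp_lp f" "idot s e0 = Max (idot s ` supp_lp f)"
    by (metis imageE)
  have "{e \<in> supp_lp f. idot s e = idot s e0} = {e0}"
    using e0(1) assms(3) by (auto dest: inj_onD)
  then show ?thesis
    using that[OF e0(1)] fin e0 by (simp add: subst_coeff_def)
qed

lemma subst_eval_eventually_nonzero:
  assumes "laurent_poly f" and "supp_lp f \<noteq> {}" and "inj_on (idot s) (supp_lp f)"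
  shows "\<forall>\<^sub>F \<xi> in at_top. subst_eval f s \<xi> \<noteq> 0"
proof -
  obtain e0 where e0: "e0 \<in> supp_lp f" "\<And>e. e \<in> supp_lp f \<Longrightarrow> idot s e \<le> idot s e0"
    "subst_coeff f s (idot s e0) = f e0"
    using top_exponent[OF assms] by blast
  have "((\<lambda>\<xi>. subst_eval f s \<xi> / \<xi> powi idot s e0) \<longlongrightarrow> real_of_int (f e0)) at_top"
    using tendsto_subst_eval_div_powi[OF assms(1) e0(2)] e0(3) by simp
  moreover have "real_of_int (f e0) \<noteq> 0" using e0(1) by (simp add: supp_lp_def)
  ultimately have "\<forall>\<^sub>F \<xi> in at_top. subst_eval f s \<xi> / \<xi> powi idot s e0 \<noteq> 0"
    by (rule tendsto_imp_eventually_ne)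
  then show ?thesis by (rule eventually_mono) auto
qed

lemma N_small_idot_bound:
  assumes "N_small f1 f2" and "e \<in> supp_lp f1" and "\<And>e. e \<in> supp_lp f2 \<Longrightarrow> idot s e \<le> d"
  shows "idot s e \<le> d"
proof -
  have "newton_polytope f2 \<subseteq> {x. real_vec s \<bullet> x \<le> real_of_int d}"
    unfolding newton_polytope_def
    by (rule hull_minimal) (use assms(3) in \<open>auto simp: inner_real_vec convex_halfspace_le\<close>)
  moreover have "real_vec e \<in> newton_polytope f1"
    unfolding newton_polytope_def using assms(2) by (intro hull_inc) auto
  ultimately show ?thesis using assms(1) by (auto simp: N_small_def inner_real_vec)
qed

lemma finite_limit_if_N_small:
  assumes "laurent_poly f1" and "laurent_poly f2" and "supp_lp f2 \<noteq> {}"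
    and "inj_on (idot s) (supp_lp f2)" and "N_small f1 f2"
  shows "finite_limit f1 f2 s"
proof -
  obtain e2 where e2: "e2 \<in> supp_lp f2" "\<And>e. e \<in> supp_lp f2 \<Longrightarrow> idot s e \<le> idot s e2"
    "subst_coeff f2 s (idot s e2) = f2 e2"
    using top_exponent[OF assms(2-4)] by blast
  define d where "d = idot s e2"
  have c2: "f2 e2 \<noteq> 0" using e2(1) by (simp add: supp_lp_def)
  have lim1: "((\<lambda>\<xi>. subst_eval f1 s \<xi> / \<xi> powi d) \<longlongrightarrow> real_of_int (subst_coeff f1 s d)) at_top"
    using tendsto_subst_eval_div_powi[OF assms(1) N_small_idot_bound[OF assms(5)]] e2(2)
    by (simp add: d_def)
  have lim2: "((\<lambda>\<xi>. subst_eval f2 s \<xi> / \<xi> powi d) \<longlongrightarrow> real_of_int (f2 e2)) at_top"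
    using tendsto_subst_eval_div_powi[OF assms(2) e2(2)] e2(3) by (simp add: d_def)
  have ev: "\<forall>\<^sub>F \<xi> in at_top. (subst_eval f1 s \<xi> / \<xi> powi d) / (subst_eval f2 s \<xi> / \<xi> powi d)
      = subst_eval f1 s \<xi> / subst_eval f2 s \<xi>"
    using eventually_gt_at_top[of "0::real"] by eventually_elim simp
  have "((\<lambda>\<xi>. subst_eval f1 s \<xi> / subst_eval f2 s \<xi>) \<longlongrightarrow>
      real_of_int (subst_coeff f1 s d) / real_of_int (f2 e2)) at_top"
    using tendsto_divide[OF lim1 lim2] c2 unfolding tendsto_cong[OF ev] by simp
  moreover have "subst_coeff f2 s d \<noteq> 0" using e2(3) c2 by (simp add: d_def)
  ultimately show ?thesis unfolding finite_limit_def by blast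
qed

lemma not_finite_limit_if_exceeds:
  assumes "laurent_poly f1" and "laurent_poly f2" and "supp_lp f2 \<noteq> {}"
    and "inj_on (idot s) (supp_lp f1)" and "inj_on (idot s) (supp_lp f2)"
    and "e1 \<in> supp_lp f1" and "\<And>e. e \<in> supp_lp f2 \<Longrightarrow> idot s e < idot s e1"
  shows "\<not> finite_limit f1 f2 s"
proof
  assume "finite_limit f1 f2 s"
  then obtain L where L: "((\<lambda>\<xi>. subst_eval f1 s \<xi> / subst_eval f2 s \<xi>) \<longlongrightarrow> L) at_top"
    unfolding finite_limit_def by blast
  obtain e0 where e0: "e0 \<in> supp_lp f1" "\<And>e. e \<in> supp_lp f1 \<Longrightarrow> idot s e \<le> idot s e0"
    "subst_coeff f1 s (idot s e0) = f1 e0"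
    using top_exponent[OF assms(1) _ assms(4)] assms(6) by blast
  define d where "d = idot s e0"
  have below: "idot s e < d" if "e \<in> supp_lp f2" for e
    using assms(7)[OF that] e0(2)[OF assms(6)] by (simp add: d_def)
  have "{e \<in> supp_lp f2. idot s e = d} = {}" using below by force
  then have "subst_coeff f2 s d = 0" unfolding subst_coeff_def by (metis sum.empty)
  then have lim2: "((\<lambda>\<xi>. subst_eval f2 s \<xi> / \<xi> powi d) \<longlongrightarrow> 0) at_top"
    using tendsto_subst_eval_div_powi[OF assms(2), of s d] below by fastforce
  have ev: "\<forall>\<^sub>F \<xi> in at_top. (subst_eval f1 s \<xi> / subst_eval f2 s \<xi>) * (subst_eval f2 s \<xi> / \<xi> powi d)
      = subst_eval f1 s \<xi> / \<xi> powi d"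
    using subst_eval_eventually_nonzero[OF assms(2,3,5)] by eventually_elim simp
  have "((\<lambda>\<xi>. subst_eval f1 s \<xi> / \<xi> powi d) \<longlongrightarrow> 0) at_top"
    using tendsto_mult[OF L lim2] unfolding tendsto_cong[OF ev] by simp
  moreover have "((\<lambda>\<xi>. subst_eval f1 s \<xi> / \<xi> powi d) \<longlongrightarrow> real_of_int (f1 e0)) at_top"
    using tendsto_subst_eval_div_powi[OF assms(1) e0(2)] e0(3) by (simp add: d_def)
  ultimately have "real_of_int (f1 e0) = 0"
    using tendsto_unique[OF trivial_limit_at_top_linorder] by blast
  with e0(1) show False by (simp add: supp_lp_def)
qed

subsection \<open>Lattice directions off finitely many hyperplanes\<close>

definition hyperplane_union :: "((real^'r) \<times> real) set \<Rightarrow> (int^'r) set" where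
  "hyperplane_union H = (\<Union>(a, c)\<in>H. {s. a \<bullet> real_vec s = c})"

lemma hyperplane_union_Un: "hyperplane_union (G \<union> H) = hyperplane_union G \<union> hyperplane_union H"
  by (simp add: hyperplane_union_def)

lemma in_finite_hyperplanes_hyperplane_union:
  assumes "finite H" and "\<forall>(a, c)\<in>H. a \<noteq> 0"
  shows "in_finite_hyperplanes (hyperplane_union H)"
  using assms unfolding in_finite_hyperplanes_def hyperplane_union_def by blast

definition difference_hyperplanes :: "(int^'r) set \<Rightarrow> ((real^'r) \<times> real) set" where
  "difference_hyperplanes S = (\<lambda>(a, b). (real_vec (a - b), 0)) ` {(a, b) \<in> S \<times> S. a \<noteq> b}"

lemma finite_difference_hyperplanes: "finite S \<Longrightarrow> finite (difference_hyperplanes S)"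
  unfolding difference_hyperplanes_def
  by (rule finite_imageI, rule finite_subset[of _ "S \<times> S"]) auto

lemma difference_hyperplanes_normal_nonzero: "\<forall>(a, c)\<in>difference_hyperplanes S. a \<noteq> 0"
  by (auto simp: difference_hyperplanes_def real_vec_diff real_vec_eq_iff)

lemma inj_on_idot_outside_difference_hyperplanes:
  assumes "s \<notin> hyperplane_union (difference_hyperplanes S)"
  shows "inj_on (idot s) S"
proof (rule inj_onI, rule ccontr)
  fix a b assume ab: "a \<in> S" "b \<in> S" "idot s a = idot s b" "a \<noteq> b"
  then have "(real_vec (a - b), 0) \<in> difference_hyperplanes S"
    by (force simp: difference_hyperplanes_def)
  moreover have "real_vec (a - b) \<bullet> real_vec s = 0"
    using ab(3) by (simp add: inner_commute[of _ "real_vec s"] inner_real_vec idot_diff_right)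
  ultimately show False using assms by (force simp: hyperplane_union_def)
qed

lemma open_avoids_hyperplanes_through_origin:
  fixes U :: "'a::real_inner set"
  assumes "open U" and "w \<in> U" and "finite A" and "0 \<notin> A"
  shows "\<exists>w'\<in>U. \<forall>a\<in>A. a \<bullet> w' \<noteq> 0"
  using assms(3,4)
proof (induction A rule: finite_induct)
  case empty
  then show ?case using assms(2) by blast
next
  case (insert b A)
  then obtain w' where w': "w' \<in> U" "\<forall>a\<in>A. a \<bullet> w' \<noteq> 0" by auto
  show ?case
  proof (cases "b \<bullet> w' = 0")
    case False
    then show ?thesis using w' by auto
  next
    case True
    obtain \<epsilon> where \<epsilon>: "\<epsilon> > 0" "ball w' \<epsilon> \<subseteq> U"
      using assms(1) w'(1) open_contains_ball by blast
    have "b \<noteq> 0" using insert.prems by auto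
    define F where "F = (\<lambda>a. - (a \<bullet> w') / (a \<bullet> b)) ` A"
    have "finite F" using insert.hyps by (simp add: F_def)
    then have "infinite ({0<..<\<epsilon> / norm b} - F)"
      using \<epsilon>(1) \<open>b \<noteq> 0\<close> by (intro Diff_infinite_finite infinite_Ioo) auto
    then obtain t where t: "0 < t" "t < \<epsilon> / norm b" "t \<notin> F"
      by (metis Diff_iff finite.emptyI greaterThanLessThan_iff ex_in_conv)
    have "dist w' (w' + t *\<^sub>R b) < \<epsilon>"
      using t \<open>b \<noteq> 0\<close> by (simp add: dist_norm pos_less_divide_eq)
    then have "w' + t *\<^sub>R b \<in> U" using \<epsilon>(2) by auto
    moreover have "b \<bullet> (w' + t *\<^sub>R b) \<noteq> 0"
      using True t(1) \<open>b \<noteq> 0\<close> by (simp add: inner_add_right)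
    moreover have "a \<bullet> (w' + t *\<^sub>R b) \<noteq> 0" if "a \<in> A" for a
    proof
      assume "a \<bullet> (w' + t *\<^sub>R b) = 0"
      then have h: "a \<bullet> w' + t * (a \<bullet> b) = 0" by (simp add: inner_add_right)
      then have "a \<bullet> b \<noteq> 0" using w'(2) that by auto
      with h have "t = - (a \<bullet> w') / (a \<bullet> b)" by (simp add: field_simps)
      then show False using t(3) that by (auto simp: F_def)
    qed
    ultimately show ?thesis by auto
  qed
qed

text \<open>Scale a point of the cone by N and round coordinatewise; the rounding error is at most
  CARD('r), which is small compared with N times the radius of a ball around the point.\<close>

lemma open_cone_contains_lattice_point:
  fixes U :: "(real^'r) set"
  assumes "open U" and "w \<in> U" and "\<forall>x\<in>U. \<forall>t>0. t *\<^sub>R x \<in> U"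
  obtains q where "real_vec q \<in> U"
proof -
  obtain \<epsilon> where \<epsilon>: "\<epsilon> > 0" "ball w \<epsilon> \<subseteq> U" using assms(1,2) open_contains_ball by blast
  obtain N :: nat where N: "real CARD('r) / \<epsilon> < real N" using reals_Archimedean2 by blast
  have "0 < real CARD('r) / \<epsilon>" using \<epsilon>(1) by simp
  with N have N_pos: "real N > 0" by linarith
  have "real CARD('r) < real N * \<epsilon>" using N \<epsilon>(1) by (simp add: field_simps)
  define q :: "int^'r" where "q = (\<chi> i. \<lfloor>real N * w $ i\<rfloor>)"
  have "norm (real_vec q - real N *\<^sub>R w) \<le> (\<Sum>i\<in>UNIV. \<bar>(real_vec q - real N *\<^sub>R w) $ i\<bar>)"
    by (rule norm_le_l1_cart)
  also have "\<dots> \<le> (\<Sum>i\<in>(UNIV::'r set). 1)"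
    by (intro sum_mono) (simp add: q_def real_vec_def, linarith)
  also have "\<dots> < real N * \<epsilon>" using \<open>real CARD('r) < real N * \<epsilon>\<close> by simp
  finally have "norm (real N *\<^sub>R ((1 / real N) *\<^sub>R real_vec q - w)) < real N * \<epsilon>"
    using N_pos by (simp add: algebra_simps)
  then have "(1 / real N) *\<^sub>R real_vec q \<in> ball w \<epsilon>"
    using N_pos by (simp add: dist_norm norm_minus_commute)
  then have "real N *\<^sub>R ((1 / real N) *\<^sub>R real_vec q) \<in> U" using \<epsilon>(2) assms(3) N_pos by blast
  with N_pos show ?thesis using that by simp
qed

lemma open_cone_contains_lattice_point_off_hyperplanes:
  fixes U :: "(real^'r) set"
  assumes "open U" and "w \<in> U" and "\<forall>x\<in>U. \<forall>t>0. t *\<^sub>R x \<in> U"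
    and "finite H" and "\<forall>(a, c)\<in>H. a \<noteq> 0"
  obtains s where "real_vec s \<in> U" and "s \<notin> hyperplane_union H"
proof -
  define U' where "U' = U \<inter> (\<Inter>a\<in>fst ` H. {x. a \<bullet> x \<noteq> 0})"
  have "open {x::real^'r. a \<bullet> x \<noteq> 0}" for a
    by (rule open_Collect_neq) (intro continuous_intros)+
  then have "open U'" using assms(1,4) by (auto simp: U'_def)
  obtain w' where "w' \<in> U'"
    using open_avoids_hyperplanes_through_origin[OF assms(1,2), of "fst ` H"] assms(4,5)
    by (force simp: U'_def)
  moreover have "\<forall>x\<in>U'. \<forall>t>0. t *\<^sub>R x \<in> U'"
    using assms(3) by (auto simp: U'_def)
  ultimately obtain q where q: "real_vec q \<in> U'"
    using open_cone_contains_lattice_point[OF \<open>open U'\<close>] by blast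
  define F where "F = (\<lambda>(a, c). c / (a \<bullet> real_vec q)) ` H"
  have "finite {k::nat. real k \<in> F}"
    using assms(4) by (intro finite_vimageI[of F real, unfolded vimage_def]) (auto simp: F_def inj_def)
  then have "infinite ({1..} - {k::nat. real k \<in> F})"
    by (intro Diff_infinite_finite infinite_Ici)
  then obtain k :: nat where k: "k \<ge> 1" "real k \<notin> F"
    by (metis (no_types, lifting) Diff_iff atLeast_iff finite.emptyI mem_Collect_eq ex_in_conv)
  define s :: "int^'r" where "s = (\<chi> i. int k * q $ i)"
  have s: "real_vec s = real k *\<^sub>R real_vec q" by (simp add: s_def real_vec_def vec_eq_iff)
  have "real_vec s \<in> U" using q k(1) assms(3) by (simp add: s U'_def)
  moreover have "a \<bullet> real_vec s \<noteq> c" if "(a, c) \<in> H" for a c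
  proof
    assume "a \<bullet> real_vec s = c"
    moreover have "a \<bullet> real_vec q \<noteq> 0" using q that by (force simp: U'_def)
    ultimately have "real k = c / (a \<bullet> real_vec q)" by (simp add: s field_simps)
    then show False using k(2) that by (force simp: F_def)
  qed
  ultimately show ?thesis using that by (force simp: hyperplane_union_def)
qed

subsection \<open>Exponents of f1 beyond the Newton polytope of f2\<close>

lemma not_N_small_exceeding_direction:
  assumes "laurent_poly f2" and "\<not> N_small f1 f2"
  obtains e1 w where "e1 \<in> supp_lp f1" and "\<forall>e\<in>supp_lp f2. w \<bullet> real_vec e < w \<bullet> real_vec e1"
proof -
  obtain e1 where e1: "e1 \<in> supp_lp f1" "real_vec e1 \<notin> newton_polytope f2"
    using assms(2) hull_minimal[of "real_vec ` supp_lp f1" "newton_polytope f2" convex]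
    by (auto simp: N_small_def newton_polytope_def convex_convex_hull)
  have "compact (newton_polytope f2)"
    using assms(1) unfolding newton_polytope_def laurent_poly_def
    by (intro compact_convex_hull finite_imp_compact) auto
  then obtain a b where ab: "a \<bullet> real_vec e1 < b" "\<forall>x\<in>newton_polytope f2. b < a \<bullet> x"
    using separating_hyperplane_closed_point[OF convex_convex_hull compact_imp_closed] e1(2)
    unfolding newton_polytope_def by blast
  have "(- a) \<bullet> real_vec e < (- a) \<bullet> real_vec e1" if "e \<in> supp_lp f2" for e
    using ab that unfolding newton_polytope_def by (force intro: hull_inc)
  with e1(1) show ?thesis using that by blast
qed

lemma exceeding_lattice_direction_off_hyperplanes:
  fixes E :: "(int^'r) set"
  assumes "finite E" and "\<forall>e\<in>E. w \<bullet> real_vec e < w \<bullet> real_vec e1"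
    and "finite H" and "\<forall>(a, c)\<in>H. a \<noteq> 0"
  obtains s where "\<forall>e\<in>E. idot s e < idot s e1" and "s \<notin> hyperplane_union H"
proof -
  define U where "U = (\<Inter>e\<in>E. {x. (real_vec e - real_vec e1) \<bullet> x < 0})"
  have "open U" unfolding U_def using assms(1) by (intro open_INT ballI open_halfspace_lt)
  moreover have "w \<in> U"
    using assms(2) by (auto simp: U_def inner_diff_left inner_commute[of _ w])
  moreover have "\<forall>x\<in>U. \<forall>t>0. t *\<^sub>R x \<in> U"
    by (auto simp: U_def mult_pos_neg)
  ultimately obtain s where s: "real_vec s \<in> U" "s \<notin> hyperplane_union H"
    using open_cone_contains_lattice_point_off_hyperplanes[OF _ _ _ assms(3,4)] by blast
  have "idot s e < idot s e1" if "e \<in> E" for e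
    using s(1) that
    by (simp add: U_def inner_diff_left inner_commute[of _ "real_vec s"] inner_real_vec)
  with s(2) show ?thesis using that by blast
qed

theorem proposition3p6:
  fixes f1 f2 :: "int^'r \<Rightarrow> int"
  assumes "laurent_poly f1" and "laurent_poly f2" and "\<exists>e. f2 e \<noteq> 0"
  shows "(\<exists>K. in_finite_hyperplanes K \<and>
            (N_small f1 f2 \<longrightarrow> (\<forall>s. s \<notin> K \<longrightarrow> finite_limit f1 f2 s)))
       \<and> (\<forall>K. in_finite_hyperplanes K \<and> (\<forall>s. s \<notin> K \<longrightarrow> finite_limit f1 f2 s)
            \<longrightarrow> N_small f1 f2)"
proof -
  define S where "S = supp_lp f1 \<union> supp_lp f2"
  define G where "G = difference_hyperplanes S"
  have "finite S" using assms(1,2) by (simp add: S_def laurent_poly_def)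
  then have G: "finite G" "\<forall>(a, c)\<in>G. a \<noteq> 0"
    by (simp_all add: G_def finite_difference_hyperplanes difference_hyperplanes_normal_nonzero)
  have ne2: "supp_lp f2 \<noteq> {}" using assms(3) by (auto simp: supp_lp_def)
  have generic: "inj_on (idot s) (supp_lp f1)" "inj_on (idot s) (supp_lp f2)"
    if "s \<notin> hyperplane_union G" for s
    using inj_on_idot_outside_difference_hyperplanes[OF that[unfolded G_def]]
    by (auto simp: S_def intro: inj_on_subset)
  have "N_small f1 f2" if K: "in_finite_hyperplanes K" "\<forall>s. s \<notin> K \<longrightarrow> finite_limit f1 f2 s" for K
  proof (rule ccontr)
    assume "\<not> N_small f1 f2"
    then obtain e1 w where e1: "e1 \<in> supp_lp f1"
      and w: "\<forall>e\<in>supp_lp f2. w \<bullet> real_vec e < w \<bullet> real_vec e1"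
      using not_N_small_exceeding_direction[OF assms(2)] by blast
    obtain H where H: "finite H" "\<forall>(a, c)\<in>H. a \<noteq> 0" "K \<subseteq> hyperplane_union H"
      using K(1) by (auto simp: in_finite_hyperplanes_def hyperplane_union_def)
    obtain s where s: "\<forall>e\<in>supp_lp f2. idot s e < idot s e1" "s \<notin> hyperplane_union (H \<union> G)"
    proof (rule exceeding_lattice_direction_off_hyperplanes[OF _ w])
      show "finite (supp_lp f2)" using assms(2) by (simp add: laurent_poly_def)
      show "finite (H \<union> G)" and "\<forall>(a, c)\<in>H \<union> G. a \<noteq> 0" using H G by auto
    qed
    then have "finite_limit f1 f2 s" using K(2) H(3) by (auto simp: hyperplane_union_Un)
    moreover have "\<not> finite_limit f1 f2 s"
      using not_finite_limit_if_exceeds[OF assms(1,2) ne2 _ _ e1] s generic[of s]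
      by (simp add: hyperplane_union_Un)
    ultimately show False by blast
  qed
  moreover have "in_finite_hyperplanes (hyperplane_union G)"
    using G by (rule in_finite_hyperplanes_hyperplane_union)
  ultimately show ?thesis
    using finite_limit_if_N_small[OF assms(1,2) ne2 generic(2)] by blast
qed

end
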